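(* Let $k$ be a difference field of characteristic $0$, $R=k\{y_1,\ldots,y_n\}$, $S\subseteq\mathbb{N}[x]^n$, and $I=\{\mathbf{y}^{\mathbf{u}}:\mathbf{u}\in S\}$ the perfect closure of these monomials. Then there exist $\mathbf{b}_1,\ldots,\mathbf{b}_s\in\{0,1\}^n$ such that \[I=\mathfrak{p}^{\mathbf{b}_1}\cap\cdots\cap\mathfrak{p}^{\mathbf{b}_s}.\] Moreover, if such a decomposition is irredundant, then it is unique.
   Context: A difference field is a field $k$ with a ring endomorphism $\sigma$. $R=k\{y_1,\ldots,y_n\}$ is the polynomial ring over $k$ in the variables $\sigma^j(y_i)$ ($1\le i\le n$, $j\ge0$), with $\sigma$ extended naturally. For $p=\sum_i c_ix^i\in\mathbb{N}[x]$ and $a\in R$, $a^p=\prod_i(\sigma^i(a))^{c_i}$; $\mathbf{y}^{\mathbf{u}}=y_1^{u_1}\cdots y_n^{u_n}$ for $\mathbf{u}\in\mathbb{N}[x]^n$. A $\sigma$-ideal is an ideal stable under $\sigma$; it is perfect if $a^g\in I$ implies $a\in I$ for all $a\in R$ and all nonzero $g\in\mathbb{N}[x]$. For $F\subseteq R$, $\{F\}$ denotes the smallest perfect $\sigma$-ideal containing $F$. For $\mathbf{b}\in\{0,1\}^n$, $\mathfrak{p}^{\mathbf{b}}$ is the $\sigma$-ideal generated by $\{y_i: b_i\neq0\}$. *)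

theory Defs
  imports "HOL-Library.Poly_Mapping" "HOL-Computational_Algebra.Polynomial"
begin

text \<open>Difference polynomial ring k{y_1,...,y_n}: the variables are indexed by
  'n (a finite type with n elements) and sigma^j(y_i) is the variable (i,j).\<close>

type_synonym ('n, 'k) dpoly = "(('n \<times> nat) \<Rightarrow>\<^sub>0 nat) \<Rightarrow>\<^sub>0 'k"

definition ring_endo :: "('k::field \<Rightarrow> 'k) \<Rightarrow> bool" where
  "ring_endo s \<longleftrightarrow> s 1 = 1 \<and> (\<forall>a b. s (a + b) = s a + s b) \<and> (\<forall>a b. s (a * b) = s a * s b)"

definition mon_shift :: "(('n \<times> nat) \<Rightarrow>\<^sub>0 nat) \<Rightarrow> (('n \<times> nat) \<Rightarrow>\<^sub>0 nat)" where
  "mon_shift m = (\<Sum>v\<in>Poly_Mapping.keys m. Poly_Mapping.single (fst v, Suc (snd v)) (Poly_Mapping.lookup m v))"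

definition sigmaR :: "('k::field \<Rightarrow> 'k) \<Rightarrow> ('n, 'k) dpoly \<Rightarrow> ('n, 'k) dpoly" where
  "sigmaR s p = (\<Sum>m\<in>Poly_Mapping.keys p. Poly_Mapping.single (mon_shift m) (s (Poly_Mapping.lookup p m)))"

definition yvar :: "'n \<Rightarrow> ('n, 'k::field) dpoly" where
  "yvar i = Poly_Mapping.single (Poly_Mapping.single (i, 0) 1) 1"

text \<open>a^g for g \<in> N[x]: prod_i (sigma^i a)^(c_i).\<close>
definition spow :: "('k::field \<Rightarrow> 'k) \<Rightarrow> ('n, 'k) dpoly \<Rightarrow> nat poly \<Rightarrow> ('n, 'k) dpoly" where
  "spow s a g = (\<Prod>i\<le>Polynomial.degree g. ((sigmaR s ^^ i) a) ^ Polynomial.coeff g i)"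

definition ymon :: "('k::field \<Rightarrow> 'k) \<Rightarrow> ('n::finite \<Rightarrow> nat poly) \<Rightarrow> ('n, 'k) dpoly" where
  "ymon s u = (\<Prod>i\<in>UNIV. spow s (yvar i) (u i))"

definition is_ideal :: "'a::comm_ring_1 set \<Rightarrow> bool" where
  "is_ideal I \<longleftrightarrow> 0 \<in> I \<and> (\<forall>a\<in>I. \<forall>b\<in>I. a + b \<in> I) \<and> (\<forall>r. \<forall>a\<in>I. r * a \<in> I)"

definition is_sigma_ideal :: "('k::field \<Rightarrow> 'k) \<Rightarrow> ('n, 'k) dpoly set \<Rightarrow> bool" where
  "is_sigma_ideal s I \<longleftrightarrow> is_ideal I \<and> (\<forall>a\<in>I. sigmaR s a \<in> I)"

definition is_perfect_sigma_ideal :: "('k::field \<Rightarrow> 'k) \<Rightarrow> ('n, 'k) dpoly set \<Rightarrow> bool" where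
  "is_perfect_sigma_ideal s I \<longleftrightarrow> is_sigma_ideal s I \<and>
     (\<forall>a g. g \<noteq> 0 \<longrightarrow> spow s a g \<in> I \<longrightarrow> a \<in> I)"

definition perfect_closure :: "('k::field \<Rightarrow> 'k) \<Rightarrow> ('n, 'k) dpoly set \<Rightarrow> ('n, 'k) dpoly set" where
  "perfect_closure s F = \<Inter>{J. is_perfect_sigma_ideal s J \<and> F \<subseteq> J}"

definition sigma_ideal_gen :: "('k::field \<Rightarrow> 'k) \<Rightarrow> ('n, 'k) dpoly set \<Rightarrow> ('n, 'k) dpoly set" where
  "sigma_ideal_gen s F = \<Inter>{J. is_sigma_ideal s J \<and> F \<subseteq> J}"

text \<open>p^b for b \<in> {0,1}^n, encoded as b :: 'n \<Rightarrow> bool (b i \<longleftrightarrow> b_i = 1).\<close>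
definition pb :: "('k::field \<Rightarrow> 'k) \<Rightarrow> ('n \<Rightarrow> bool) \<Rightarrow> ('n, 'k) dpoly set" where
  "pb s b = sigma_ideal_gen s {yvar i | i. b i}"

end

theory Submission
  imports Defs "HOL-Library.Countable_Set"
begin

text \<open>Let \<open>p^b\<close> be spanned by the monomials involving some \<open>\<sigma>^j y_i\<close> with \<open>b i\<close>. Setting these
  variables to zero is a ring homomorphism onto a polynomial ring, so \<open>p^b\<close> is prime; as \<open>\<sigma>\<close>
  maps monomials free of them injectively to such monomials, \<open>p^b\<close> is a perfect \<open>\<sigma>\<close>-ideal.
  Conversely, a perfect \<open>\<sigma>\<close>-ideal containing \<open>y^\<mu>\<close> contains every monomial in which each
  \<open>y_i\<close> occurring in \<open>y^\<mu>\<close> occurs: factors are shifted up using \<open>(y^a \<sigma>(y^b))^{1+x}\<close>,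
  repeated factors are removed using \<open>a^2\<close>, and a common shift is undone using \<open>a^x\<close>.
  Hence the perfect closure \<open>I\<close> of the monomials is spanned by monomials, and a monomial lies
  in \<open>I\<close> iff it lies in every \<open>p^b \<supseteq> I\<close>. Uniqueness of irredundant decompositions follows
  because the \<open>p^b\<close> are distinct primes.\<close>

lemma poly_mapping_sum_single:
  "f = (\<Sum>a\<in>Poly_Mapping.keys f. Poly_Mapping.single a (Poly_Mapping.lookup f a))"
proof (rule poly_mapping_eqI)
  fix k
  have "(\<Sum>a\<in>Poly_Mapping.keys f. Poly_Mapping.lookup (Poly_Mapping.single a (Poly_Mapping.lookup f a)) k)
      = (\<Sum>a\<in>Poly_Mapping.keys f. if a = k then Poly_Mapping.lookup f a else 0)"
    by (intro sum.cong) (auto simp: lookup_single when_def)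
  also have "\<dots> = Poly_Mapping.lookup f k"
    by (simp add: in_keys_iff)
  finally show "Poly_Mapping.lookup f k =
      Poly_Mapping.lookup (\<Sum>a\<in>Poly_Mapping.keys f. Poly_Mapping.single a (Poly_Mapping.lookup f a)) k"
    by (simp add: lookup_sum)
qed

lemma keys_add_nat:
  "Poly_Mapping.keys (a + b :: 'a \<Rightarrow>\<^sub>0 nat) = Poly_Mapping.keys a \<union> Poly_Mapping.keys b"
  by (auto simp: in_keys_iff lookup_add)

lemma poly_mapping_nat_remove_single:
  "Poly_Mapping.lookup (t :: 'a \<Rightarrow>\<^sub>0 nat) w \<noteq> 0 \<Longrightarrow>
     t = (t - Poly_Mapping.single w 1) + Poly_Mapping.single w 1"
  by (rule poly_mapping_eqI) (auto simp: lookup_add lookup_minus lookup_single when_def)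

lemma poly_mapping_nat_induct [case_names zero add_single]:
  assumes "P 0" and add_single: "\<And>a v. P a \<Longrightarrow> P (a + Poly_Mapping.single v (1::nat))"
  shows "P a"
proof (induction a rule: update_induct)
  case const
  show ?case using assms(1) .
next
  case (update f v c)
  have "P (f + Poly_Mapping.single v n)" for n
  proof (induction n)
    case (Suc n)
    then show ?case
      using add_single[OF Suc, of v] by (simp add: add.assoc flip: single_add)
  qed (use update in simp)
  moreover have "Poly_Mapping.update v c f = f + Poly_Mapping.single v c"
    using update by (intro poly_mapping_eqI)
      (auto simp: lookup_update lookup_add lookup_single when_def in_keys_iff)
  ultimately show ?case by simp
qed

lemma lookup_mult_unique_sum:
  fixes f g :: "'m::comm_monoid_add \<Rightarrow>\<^sub>0 'b::semiring_0"
  assumes "aM \<in> Poly_Mapping.keys f" "bM \<in> Poly_Mapping.keys g"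
    and unique: "\<And>a b. a \<in> Poly_Mapping.keys f \<Longrightarrow> b \<in> Poly_Mapping.keys g \<Longrightarrow>
      a + b = aM + bM \<Longrightarrow> a = aM \<and> b = bM"
  shows "Poly_Mapping.lookup (f * g) (aM + bM) = Poly_Mapping.lookup f aM * Poly_Mapping.lookup g bM"
proof -
  define F G where "F = Poly_Mapping.keys f" and "G = Poly_Mapping.keys g"
  let ?lf = "Poly_Mapping.lookup f" and ?lg = "Poly_Mapping.lookup g"
  have "f * g = (\<Sum>a\<in>F. Poly_Mapping.single a (?lf a)) * (\<Sum>b\<in>G. Poly_Mapping.single b (?lg b))"
    using poly_mapping_sum_single[of f] poly_mapping_sum_single[of g] by (simp add: F_def G_def)
  also have "\<dots> = (\<Sum>a\<in>F. \<Sum>b\<in>G. Poly_Mapping.single (a + b) (?lf a * ?lg b))"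
    by (simp add: sum_product mult_single)
  finally have "Poly_Mapping.lookup (f * g) (aM + bM) =
      (\<Sum>a\<in>F. \<Sum>b\<in>G. if a + b = aM + bM then ?lf a * ?lg b else 0)"
    by (simp add: lookup_sum lookup_single when_def)
  also have "\<dots> = (\<Sum>a\<in>F. \<Sum>b\<in>G. if a = aM \<and> b = bM then ?lf a * ?lg b else 0)"
    by (intro sum.cong refl) (auto simp: F_def G_def dest: unique)
  also have "\<dots> = (\<Sum>a\<in>F. if a = aM then ?lf a * ?lg bM else 0)"
    using assms(2) by (intro sum.cong refl) (auto simp: G_def)
  also have "\<dots> = ?lf aM * ?lg bM"
    using assms(1) by (simp add: F_def)
  finally show ?thesis .
qed

lemma mult_nonzero_if_inj_additive:
  fixes f g :: "'m::comm_monoid_add \<Rightarrow>\<^sub>0 'b::semiring_no_zero_divisors"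
    and \<phi> :: "'m \<Rightarrow> 'o::{ordered_cancel_comm_monoid_add, linorder}"
  assumes inj: "inj \<phi>" and add: "\<And>x y. \<phi> (x + y) = \<phi> x + \<phi> y"
    and "f \<noteq> 0" "g \<noteq> 0"
  shows "f * g \<noteq> 0"
proof -
  have "\<exists>x\<in>A. \<forall>y\<in>A. \<phi> y \<le> \<phi> x" if "finite A" "A \<noteq> {}" for A
  proof -
    have "Max (\<phi> ` A) \<in> \<phi> ` A" using that by simp
    then obtain x where "x \<in> A" "\<phi> x = Max (\<phi> ` A)" by (metis imageE)
    then show ?thesis using that by (metis Max_ge finite_imageI imageI)
  qed
  then obtain aM bM
    where aM: "aM \<in> Poly_Mapping.keys f" "\<And>a. a \<in> Poly_Mapping.keys f \<Longrightarrow> \<phi> a \<le> \<phi> aM"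
      and bM: "bM \<in> Poly_Mapping.keys g" "\<And>b. b \<in> Poly_Mapping.keys g \<Longrightarrow> \<phi> b \<le> \<phi> bM"
    using assms(3,4) by (meson finite_keys keys_eq_empty)
  \<comment> \<open>the product of the two \<open>\<phi>\<close>-maximal monomials cannot be cancelled\<close>
  have "a = aM \<and> b = bM"
    if "a \<in> Poly_Mapping.keys f" "b \<in> Poly_Mapping.keys g" "a + b = aM + bM" for a b
  proof -
    have sum_eq: "\<phi> a + \<phi> b = \<phi> aM + \<phi> bM"
      using that(3) add by metis
    have "\<phi> a = \<phi> aM"
    proof (rule ccontr)
      assume "\<phi> a \<noteq> \<phi> aM"
      then have "\<phi> a < \<phi> aM" using aM(2)[OF that(1)] by simp
      then have "\<phi> a + \<phi> b < \<phi> aM + \<phi> bM" using bM(2)[OF that(2)] by (rule add_less_le_mono)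
      then show False using sum_eq by simp
    qed
    with sum_eq inj show ?thesis by (auto dest: injD)
  qed
  then have "Poly_Mapping.lookup (f * g) (aM + bM) = Poly_Mapping.lookup f aM * Poly_Mapping.lookup g bM"
    by (rule lookup_mult_unique_sum[OF aM(1) bM(1)])
  also have "\<dots> \<noteq> 0"
    using aM(1) bM(1) by (simp add: in_keys_iff)
  finally show ?thesis by auto
qed

lemma dpoly_mult_nonzero:
  fixes f g :: "('n::finite, 'k::field) dpoly"
  assumes "f \<noteq> 0" "g \<noteq> 0"
  shows "f * g \<noteq> 0"
proof -
  \<comment> \<open>relabel the countably infinite set of variables by \<open>nat\<close>, whose monomials are linearly ordered\<close>
  define e where "e = from_nat_into (UNIV :: ('n \<times> nat) set)"
  have bij: "bij e"
    unfolding e_def by (rule bij_betw_from_nat_into) (simp_all add: finite_prod)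
  then have [transfer_rule]: "inj e" by (rule bij_is_inj)
  have lookup: "Poly_Mapping.lookup (Poly_Mapping.map_key e m) k = Poly_Mapping.lookup m (e k)"
    for m :: "'n \<times> nat \<Rightarrow>\<^sub>0 nat" and k
    by transfer simp
  have inj_relabel: "inj (Poly_Mapping.map_key e :: _ \<Rightarrow> nat \<Rightarrow>\<^sub>0 nat)"
  proof (rule injI, rule poly_mapping_eqI)
    fix a b :: "'n \<times> nat \<Rightarrow>\<^sub>0 nat" and v
    assume "Poly_Mapping.map_key e a = Poly_Mapping.map_key e b"
    then have "Poly_Mapping.lookup a (e (inv e v)) = Poly_Mapping.lookup b (e (inv e v))"
      by (metis lookup)
    then show "Poly_Mapping.lookup a v = Poly_Mapping.lookup b v"
      using bij by (simp add: bij_is_surj surj_f_inv_f)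
  qed
  show ?thesis
    by (rule mult_nonzero_if_inj_additive[OF inj_relabel _ assms]) (simp add: map_key_plus[OF \<open>inj e\<close>])
qed

definition is_prime_ideal :: "'a::comm_ring_1 set \<Rightarrow> bool" where
  "is_prime_ideal P \<longleftrightarrow> is_ideal P \<and> 1 \<notin> P \<and> (\<forall>a c. a * c \<in> P \<longrightarrow> a \<in> P \<or> c \<in> P)"

lemma ideal_mult_left: "is_ideal J \<Longrightarrow> a \<in> J \<Longrightarrow> r * a \<in> J"
  unfolding is_ideal_def by blast

lemma ideal_sum:
  assumes "is_ideal J" "\<And>i. i \<in> A \<Longrightarrow> f i \<in> J"
  shows "sum f A \<in> J"
  using assms(2)
  by (induction A rule: infinite_finite_induct) (use assms(1) in \<open>auto simp: is_ideal_def\<close>)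

lemma prime_ideal_prod_notin:
  assumes "is_prime_ideal P" "finite A" "\<And>i. i \<in> A \<Longrightarrow> f i \<notin> P"
  shows "prod f A \<notin> P"
  using assms(2,3) by (induction A rule: finite_induct) (use assms(1) in \<open>auto simp: is_prime_ideal_def\<close>)

lemma prime_ideal_power_notin: "is_prime_ideal P \<Longrightarrow> a \<notin> P \<Longrightarrow> a ^ n \<notin> P"
  using prime_ideal_prod_notin[of P "{..<n}" "\<lambda>_. a"] by simp

lemma prime_ideal_contains_Inter:
  assumes P: "is_prime_ideal P" and "finite B" and ideals: "\<And>b. b \<in> B \<Longrightarrow> is_ideal (Q b)"
    and sub: "(\<Inter>b\<in>B. Q b) \<subseteq> P"
  shows "\<exists>b\<in>B. Q b \<subseteq> P"
proof (rule ccontr)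
  assume "\<not> ?thesis"
  then have "\<forall>b\<in>B. \<exists>x. x \<in> Q b \<and> x \<notin> P" by blast
  then obtain g where g: "\<And>b. b \<in> B \<Longrightarrow> g b \<in> Q b \<and> g b \<notin> P" by metis
  have "prod g B \<in> Q b" if "b \<in> B" for b
    using ideal_mult_left[OF ideals[OF that], of "g b" "prod g (B - {b})"] g[OF that] that \<open>finite B\<close>
    by (simp add: prod.remove mult.commute)
  moreover have "prod g B \<notin> P"
    using prime_ideal_prod_notin[OF P \<open>finite B\<close>] g by blast
  ultimately show False using sub by blast
qed

lemma irredundant_Inter_subset:
  fixes Q :: "'b \<Rightarrow> 'a set"
  assumes inj: "inj Q"
    and avoid: "\<And>B c. finite B \<Longrightarrow> (\<Inter>b\<in>B. Q b) \<subseteq> Q c \<Longrightarrow> \<exists>b\<in>B. Q b \<subseteq> Q c"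
    and fin: "finite B1" "finite B2" and eq: "(\<Inter>b\<in>B1. Q b) = (\<Inter>b\<in>B2. Q b)"
    and irredundant: "\<forall>b\<in>B2. (\<Inter>c\<in>B2 - {b}. Q c) \<noteq> (\<Inter>b\<in>B2. Q b)"
  shows "B2 \<subseteq> B1"
proof
  fix c assume c: "c \<in> B2"
  then obtain b where b: "b \<in> B1" "Q b \<subseteq> Q c"
    using avoid[OF fin(1)] eq by blast
  then obtain c' where c': "c' \<in> B2" "Q c' \<subseteq> Q b"
    using avoid[OF fin(2)] eq by blast
  have "c' = c"
  proof (rule ccontr)
    assume "c' \<noteq> c"
    then have "(\<Inter>d\<in>B2 - {c}. Q d) \<subseteq> Q c" using c' b by blast
    then have "(\<Inter>d\<in>B2 - {c}. Q d) = (\<Inter>d\<in>B2. Q d)" using c by blast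
    then show False using irredundant c by blast
  qed
  then have "b = c" using b c' inj by (auto dest: injD)
  then show "c \<in> B1" using b by simp
qed

lemma irredundant_Inter_unique:
  fixes Q :: "'b \<Rightarrow> 'a set"
  assumes "inj Q"
    and "\<And>B c. finite B \<Longrightarrow> (\<Inter>b\<in>B. Q b) \<subseteq> Q c \<Longrightarrow> \<exists>b\<in>B. Q b \<subseteq> Q c"
    and "finite B1" "finite B2" "(\<Inter>b\<in>B1. Q b) = (\<Inter>b\<in>B2. Q b)"
    and "\<forall>b\<in>B1. (\<Inter>c\<in>B1 - {b}. Q c) \<noteq> (\<Inter>b\<in>B1. Q b)"
    and "\<forall>b\<in>B2. (\<Inter>c\<in>B2 - {b}. Q c) \<noteq> (\<Inter>b\<in>B2. Q b)"
  shows "B1 = B2"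
proof (rule subset_antisym)
  show "B2 \<subseteq> B1" by (rule irredundant_Inter_subset[OF assms(1-5,7)])
  show "B1 \<subseteq> B2" by (rule irredundant_Inter_subset[OF assms(1,2,4,3) assms(5)[symmetric] assms(6)])
qed

abbreviation monom :: "('n \<times> nat \<Rightarrow>\<^sub>0 nat) \<Rightarrow> ('n, 'k::field) dpoly" where
  "monom m \<equiv> Poly_Mapping.single m 1"

lemma monom_mult: "monom a * monom b = (monom (a + b) :: ('n, 'k::field) dpoly)"
  by (simp add: mult_single)

lemma lookup_mon_shift:
  "Poly_Mapping.lookup (mon_shift m) (i, j) =
     (case j of 0 \<Rightarrow> 0 | Suc j' \<Rightarrow> Poly_Mapping.lookup m (i, j'))"
proof (cases j)
  case 0
  then show ?thesis by (simp add: mon_shift_def lookup_sum lookup_single when_def)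
next
  case (Suc j')
  have "Poly_Mapping.lookup (mon_shift m) (i, j) =
      (\<Sum>v\<in>Poly_Mapping.keys m. if v = (i, j') then Poly_Mapping.lookup m v else 0)"
    unfolding mon_shift_def lookup_sum lookup_single when_def using Suc by (intro sum.cong) auto
  also have "\<dots> = Poly_Mapping.lookup m (i, j')"
    by (simp add: in_keys_iff)
  finally show ?thesis using Suc by simp
qed

lemma mon_shift_add: "mon_shift (a + b) = mon_shift a + mon_shift b"
  by (rule poly_mapping_eqI) (auto simp: lookup_mon_shift lookup_add split: nat.splits)

lemma mon_shift_single: "mon_shift (Poly_Mapping.single (i, j) n) = Poly_Mapping.single (i, Suc j) n"
  by (rule poly_mapping_eqI) (auto simp: lookup_mon_shift lookup_single when_def split: nat.splits if_splits)

lemma inj_mon_shift: "inj mon_shift"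
proof (rule injI, rule poly_mapping_eqI)
  fix a b :: "'n \<times> nat \<Rightarrow>\<^sub>0 nat" and v
  assume "mon_shift a = mon_shift b"
  then have "Poly_Mapping.lookup (mon_shift a) (fst v, Suc (snd v)) =
      Poly_Mapping.lookup (mon_shift b) (fst v, Suc (snd v))"
    by simp
  then show "Poly_Mapping.lookup a v = Poly_Mapping.lookup b v"
    by (simp add: lookup_mon_shift)
qed

lemma keys_mon_shiftD:
  "v \<in> Poly_Mapping.keys (mon_shift m) \<Longrightarrow> \<exists>j. snd v = Suc j \<and> (fst v, j) \<in> Poly_Mapping.keys m"
  by (cases v; cases "snd v") (auto simp: in_keys_iff lookup_mon_shift)

lemma lookup_funpow_mon_shift:
  "Poly_Mapping.lookup ((mon_shift ^^ N) m) (i, j + N) = Poly_Mapping.lookup m (i, j)"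
  by (induction N) (auto simp: lookup_mon_shift)

lemma ring_endo_zero: "ring_endo s \<Longrightarrow> s 0 = 0"
  unfolding ring_endo_def by (metis add_cancel_right_right add_0)

lemma ring_endo_eq_zero_iff: "ring_endo s \<Longrightarrow> s x = 0 \<longleftrightarrow> x = 0"
proof
  assume s: "ring_endo s" and "s x = 0"
  show "x = 0"
  proof (rule ccontr)
    assume "x \<noteq> 0"
    then have "1 = s x * s (inverse x)"
      using s by (metis ring_endo_def right_inverse)
    with \<open>s x = 0\<close> show False by simp
  qed
qed (simp add: ring_endo_zero)

lemma sigmaR_single:
  "ring_endo s \<Longrightarrow> sigmaR s (Poly_Mapping.single m c) = Poly_Mapping.single (mon_shift m) (s c)"
  by (cases "c = 0") (auto simp: sigmaR_def ring_endo_zero)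

lemma sigmaR_monom: "ring_endo s \<Longrightarrow> sigmaR s (monom m :: ('n, 'k::field) dpoly) = monom (mon_shift m)"
  by (simp add: sigmaR_single ring_endo_def)

lemma keys_sigmaR: "Poly_Mapping.keys (sigmaR s a) \<subseteq> mon_shift ` Poly_Mapping.keys a"
  unfolding sigmaR_def by (rule order_trans[OF keys_sum]) (auto split: if_splits)

lemma lookup_sigmaR_mon_shift:
  assumes "ring_endo s"
  shows "Poly_Mapping.lookup (sigmaR s a) (mon_shift m) = s (Poly_Mapping.lookup a m)"
proof -
  have "Poly_Mapping.lookup (sigmaR s a) (mon_shift m) =
      (\<Sum>v\<in>Poly_Mapping.keys a. if v = m then s (Poly_Mapping.lookup a v) else 0)"
    unfolding sigmaR_def lookup_sum lookup_single when_def
    by (intro sum.cong) (auto dest: injD[OF inj_mon_shift])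
  also have "\<dots> = s (Poly_Mapping.lookup a m)"
    using assms by (simp add: in_keys_iff ring_endo_zero)
  finally show ?thesis .
qed

lemma funpow_sigmaR_yvar:
  "ring_endo s \<Longrightarrow> (sigmaR s ^^ j) (yvar i) = (monom (Poly_Mapping.single (i, j) 1) :: ('n, 'k::field) dpoly)"
  by (induction j) (auto simp: yvar_def sigmaR_monom mon_shift_single)

lemma spow_x: "spow s a [:0, 1:] = sigmaR s a"
  by (simp add: spow_def atMost_Suc)

lemma spow_1_plus_x: "spow s a [:1, 1:] = a * sigmaR s a"
  by (simp add: spow_def atMost_Suc)

lemma spow_2: "spow s a [:2:] = a ^ 2"
  by (simp add: spow_def)

lemma prod_monom_exists:
  fixes f :: "'i \<Rightarrow> ('n, 'k::field) dpoly"
  shows "(\<And>i. i \<in> A \<Longrightarrow> \<exists>m. f i = monom m) \<Longrightarrow> \<exists>m. prod f A = monom m"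
proof (induction A rule: infinite_finite_induct)
  case (insert x A)
  then obtain m1 m2 where "f x = monom m1" "prod f A = monom m2" by blast
  then show ?case using insert by (auto simp: monom_mult)
qed (auto intro: exI[of _ 0])

lemma monom_power: "monom m ^ n = (monom (\<Sum>_<n. m) :: ('n, 'k::field) dpoly)"
  by (induction n) (simp_all add: monom_mult add.commute)

lemma ymon_is_monom: "ring_endo s \<Longrightarrow> \<exists>mu. ymon s u = (monom mu :: ('n::finite, 'k::field) dpoly)"
  unfolding ymon_def spow_def
  by (intro prod_monom_exists)
    (auto simp: funpow_sigmaR_yvar monom_power intro!: prod_monom_exists)

lemma perfect_sigma_ideal_Inter:
  "(\<And>J. J \<in> \<J> \<Longrightarrow> is_perfect_sigma_ideal s J) \<Longrightarrow> is_perfect_sigma_ideal s (\<Inter>\<J>)"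
  unfolding is_perfect_sigma_ideal_def is_sigma_ideal_def is_ideal_def by blast

lemma perfect_closure_perfect: "is_perfect_sigma_ideal s (perfect_closure s F)"
  unfolding perfect_closure_def by (rule perfect_sigma_ideal_Inter) blast

lemma perfect_closure_subset: "F \<subseteq> perfect_closure s F"
  unfolding perfect_closure_def by blast

lemma perfect_closure_least: "is_perfect_sigma_ideal s J \<Longrightarrow> F \<subseteq> J \<Longrightarrow> perfect_closure s F \<subseteq> J"
  unfolding perfect_closure_def by blast

lemma ideal_if_monomials_in:
  assumes "is_ideal J" "\<And>m. m \<in> Poly_Mapping.keys f \<Longrightarrow> monom m \<in> J"
  shows "f \<in> J"
proof -
  have "Poly_Mapping.single m (Poly_Mapping.lookup f m) \<in> J" if "m \<in> Poly_Mapping.keys f" for m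
    using ideal_mult_left[OF assms(1) assms(2)[OF that], of "Poly_Mapping.single 0 (Poly_Mapping.lookup f m)"]
    by (simp add: mult_single)
  then have "(\<Sum>m\<in>Poly_Mapping.keys f. Poly_Mapping.single m (Poly_Mapping.lookup f m)) \<in> J"
    by (rule ideal_sum[OF assms(1)])
  then show ?thesis
    using poly_mapping_sum_single[of f] by simp
qed

definition var_dominated :: "('n \<times> nat \<Rightarrow>\<^sub>0 nat) \<Rightarrow> ('n \<times> nat \<Rightarrow>\<^sub>0 nat) \<Rightarrow> bool" where
  "var_dominated a t \<longleftrightarrow> (\<forall>(i, j)\<in>Poly_Mapping.keys a. \<exists>j'\<ge>j. (i, j') \<in> Poly_Mapping.keys t)"

context
  fixes s :: "'k::field \<Rightarrow> 'k" and J :: "('n, 'k) dpoly set"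
  assumes endo: "ring_endo s" and perfect: "is_perfect_sigma_ideal s J"
begin

lemma perfect_mult: "a \<in> J \<Longrightarrow> r * a \<in> J"
  using perfect by (simp add: is_perfect_sigma_ideal_def is_sigma_ideal_def ideal_mult_left)

lemma perfect_sigmaR: "a \<in> J \<Longrightarrow> sigmaR s a \<in> J"
  using perfect unfolding is_perfect_sigma_ideal_def is_sigma_ideal_def by blast

lemma perfect_spow_cancel: "g \<noteq> 0 \<Longrightarrow> spow s a g \<in> J \<Longrightarrow> a \<in> J"
  using perfect unfolding is_perfect_sigma_ideal_def by blast

lemma monom_add_in: "monom a \<in> J \<Longrightarrow> monom (a + c) \<in> J"
  using perfect_mult[of "monom a" "monom c"] by (simp add: monom_mult add.commute)

lemma monom_mon_shift_cancel:
  assumes "monom (mon_shift m) \<in> J"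
  shows "monom m \<in> J"
proof (rule perfect_spow_cancel)
  show "spow s (monom m) [:0, 1:] \<in> J"
    using assms by (simp only: spow_x sigmaR_monom[OF endo])
qed simp

lemma monom_funpow_mon_shift_cancel: "monom ((mon_shift ^^ N) m) \<in> J \<Longrightarrow> monom m \<in> J"
  by (induction N) (auto intro: monom_mon_shift_cancel)

lemma monom_square_cancel:
  assumes "monom (a + v + v) \<in> J"
  shows "monom (a + v) \<in> J"
proof (rule perfect_spow_cancel)
  have "spow s (monom (a + v)) [:2:] = monom a * monom (a + v + v)"
    by (simp add: spow_2 power2_eq_square monom_mult add_ac)
  then show "spow s (monom (a + v)) [:2:] \<in> J"
    using perfect_mult[OF assms] by simp
qed simp

text \<open>\<open>(y^a \<sigma>(y^b))^{1+x} = y^a \<sigma>^2(y^b) \<cdot> \<sigma>(y^{a+b})\<close>, and \<open>\<sigma>(y^{a+b}) \<in> J\<close>.\<close>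
lemma monom_shift_factor:
  assumes "monom (a + b) \<in> J"
  shows "monom (a + mon_shift b) \<in> J"
proof (rule perfect_spow_cancel)
  have "sigmaR s (monom (a + b)) = monom (mon_shift a + mon_shift b)"
    by (simp add: sigmaR_monom[OF endo] mon_shift_add)
  moreover have "spow s (monom (a + mon_shift b)) [:1, 1:] =
      monom (a + mon_shift (mon_shift b)) * monom (mon_shift a + mon_shift b)"
    unfolding spow_1_plus_x sigmaR_monom[OF endo] monom_mult mon_shift_add by (simp add: add_ac)
  ultimately show "spow s (monom (a + mon_shift b)) [:1, 1:] \<in> J"
    using perfect_mult[OF perfect_sigmaR[OF assms]] by simp
qed simp

lemma monom_raise_var:
  "monom (a + Poly_Mapping.single (i, j) 1) \<in> J \<Longrightarrow> monom (a + Poly_Mapping.single (i, j + k) 1) \<in> J"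
proof (induction k)
  case (Suc k)
  then show ?case
    using monom_shift_factor[of a "Poly_Mapping.single (i, j + k) 1"] by (simp add: mon_shift_single)
qed simp

lemma monom_absorb:
  "var_dominated a t \<Longrightarrow> monom (a + c) \<in> J \<Longrightarrow> monom (t + c) \<in> J"
proof (induction a arbitrary: c rule: poly_mapping_nat_induct)
  case zero
  then show ?case using monom_add_in[of c t] by (simp add: add.commute)
next
  case (add_single a v)
  obtain i j where v: "v = (i, j)" by fastforce
  from add_single.prems(1) obtain j' where j': "j \<le> j'" "(i, j') \<in> Poly_Mapping.keys t"
    and dom: "var_dominated a t"
    by (auto simp: var_dominated_def keys_add_nat v)
  define w where "w = Poly_Mapping.single (i, j') (1::nat)"
  have "monom (a + c + Poly_Mapping.single (i, j) 1) \<in> J"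
    using add_single.prems(2) v by (simp add: add_ac)
  then have "monom (a + c + Poly_Mapping.single (i, j + (j' - j)) 1) \<in> J"
    by (rule monom_raise_var)
  then have "monom (a + (c + w)) \<in> J"
    using j'(1) by (simp add: add_ac w_def)
  then have "monom (t + (c + w)) \<in> J"
    by (rule add_single.IH[OF dom])
  moreover obtain r where t: "t = r + w"
    using j'(2) poly_mapping_nat_remove_single[of t "(i, j')"] by (auto simp: in_keys_iff w_def)
  ultimately have "monom (r + c + w + w) \<in> J"
    by (simp add: add_ac)
  then have "monom (r + c + w) \<in> J"
    by (rule monom_square_cancel)
  then show ?case
    by (simp add: t add_ac)
qed

lemma monom_in_if_vars_subset:
  assumes "monom mu \<in> J" "fst ` Poly_Mapping.keys mu \<subseteq> fst ` Poly_Mapping.keys m"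
  shows "monom m \<in> J"
proof -
  define N where "N = Max (insert 0 (snd ` Poly_Mapping.keys mu))"
  have "var_dominated mu ((mon_shift ^^ N) m)"
    unfolding var_dominated_def
  proof (intro ballI, clarify)
    fix i j assume ij: "(i, j) \<in> Poly_Mapping.keys mu"
    have "j \<le> N"
      unfolding N_def using ij by (intro Max_ge) (simp, force)
    obtain j0 where "(i, j0) \<in> Poly_Mapping.keys m"
      using ij assms(2) by force
    then have "(i, j0 + N) \<in> Poly_Mapping.keys ((mon_shift ^^ N) m)"
      by (simp add: in_keys_iff lookup_funpow_mon_shift)
    moreover have "j \<le> j0 + N"
      using \<open>j \<le> N\<close> by simp
    ultimately show "\<exists>j'\<ge>j. (i, j') \<in> Poly_Mapping.keys ((mon_shift ^^ N) m)" by blast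
  qed
  from monom_absorb[OF this, of 0] assms(1) have "monom ((mon_shift ^^ N) m) \<in> J" by simp
  then show ?thesis by (rule monom_funpow_mon_shift_cancel)
qed

end

definition involves :: "('n \<Rightarrow> bool) \<Rightarrow> ('n \<times> nat \<Rightarrow>\<^sub>0 nat) \<Rightarrow> bool" where
  "involves b m \<longleftrightarrow> (\<exists>v\<in>Poly_Mapping.keys m. b (fst v))"

definition pb_span :: "('n \<Rightarrow> bool) \<Rightarrow> ('n, 'k::field) dpoly set" where
  "pb_span b = {f. \<forall>m\<in>Poly_Mapping.keys f. involves b m}"

lemma involves_add: "involves b (x + y) \<longleftrightarrow> involves b x \<or> involves b y"
  by (auto simp: involves_def keys_add_nat)

lemma involves_mon_shift: "involves b (mon_shift m) \<longleftrightarrow> involves b m"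
proof
  assume "involves b (mon_shift m)"
  then show "involves b m"
    unfolding involves_def by (metis keys_mon_shiftD fst_conv)
next
  assume "involves b m"
  then obtain i j where "(i, j) \<in> Poly_Mapping.keys m" "b i"
    unfolding involves_def by auto
  then have "(i, Suc j) \<in> Poly_Mapping.keys (mon_shift m)" "b i"
    by (simp_all add: in_keys_iff lookup_mon_shift)
  then show "involves b (mon_shift m)"
    unfolding involves_def by force
qed

lemma yvar_in_pb_span_iff: "yvar i \<in> pb_span b \<longleftrightarrow> b i"
  by (simp add: pb_span_def yvar_def involves_def)

lemma one_notin_pb_span: "1 \<notin> pb_span b"
  by (simp add: pb_span_def involves_def)

lemma pb_span_sigma_ideal: "is_sigma_ideal s (pb_span b)"
  unfolding is_sigma_ideal_def is_ideal_def pb_span_def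
  using keys_add keys_mult keys_sigmaR by (fastforce simp: involves_add involves_mon_shift)+

lemma pb_span_ideal: "is_ideal (pb_span b)"
  using pb_span_sigma_ideal is_sigma_ideal_def by blast

text \<open>The substitution of \<open>0\<close> for every \<open>\<sigma>^j y_i\<close> with \<open>b i\<close>.\<close>
definition free_part :: "('n \<Rightarrow> bool) \<Rightarrow> ('n, 'k::field) dpoly \<Rightarrow> ('n, 'k) dpoly" where
  "free_part b f = Abs_poly_mapping (\<lambda>m. if involves b m then 0 else Poly_Mapping.lookup f m)"

lemma lookup_free_part:
  "Poly_Mapping.lookup (free_part b f) m = (if involves b m then 0 else Poly_Mapping.lookup f m)"
proof -
  have "finite {m. (if involves b m then 0 else Poly_Mapping.lookup f m) \<noteq> 0}"
    by (rule finite_subset[of _ "Poly_Mapping.keys f"]) (auto simp: in_keys_iff)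
  then show ?thesis by (simp add: free_part_def)
qed

lemma free_part_eq_0_iff: "free_part b f = 0 \<longleftrightarrow> f \<in> pb_span b"
  by (auto simp: pb_span_def poly_mapping_eq_iff fun_eq_iff lookup_free_part in_keys_iff)

lemma free_part_add: "free_part b (f + g) = free_part b f + free_part b g"
  by (rule poly_mapping_eqI) (simp add: lookup_free_part lookup_add)

lemma free_part_diff_in_pb_span: "f - free_part b f \<in> pb_span b"
  by (auto simp: pb_span_def in_keys_iff lookup_minus lookup_free_part split: if_splits)

lemma free_part_id: "(\<And>m. m \<in> Poly_Mapping.keys f \<Longrightarrow> \<not> involves b m) \<Longrightarrow> free_part b f = f"
  by (rule poly_mapping_eqI) (auto simp: lookup_free_part in_keys_iff)

lemma free_part_mult:
  fixes f g :: "('n, 'k::field) dpoly"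
  shows "free_part b (f * g) = free_part b f * free_part b g"
proof -
  let ?F = "free_part b"
  have "f * g = ?F f * ?F g + ((f - ?F f) * g + ?F f * (g - ?F g))"
    by (simp add: algebra_simps)
  moreover have "(f - ?F f) * g + ?F f * (g - ?F g) \<in> pb_span b"
    using pb_span_ideal free_part_diff_in_pb_span unfolding is_ideal_def by (metis mult.commute)
  moreover have "?F (?F f * ?F g) = ?F f * ?F g"
    using keys_mult[of "?F f" "?F g"]
    by (intro free_part_id) (fastforce simp: involves_add in_keys_iff lookup_free_part)
  ultimately show ?thesis
    by (metis free_part_add free_part_eq_0_iff add_0_right)
qed

lemma pb_span_prime: "is_prime_ideal (pb_span b :: ('n::finite, 'k::field) dpoly set)"
proof -
  have "a \<in> pb_span b \<or> c \<in> pb_span b" if "a * c \<in> pb_span b" for a c :: "('n, 'k) dpoly"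
    using that dpoly_mult_nonzero[of "free_part b a" "free_part b c"]
    by (auto simp flip: free_part_eq_0_iff simp: free_part_mult)
  then show ?thesis
    using pb_span_ideal one_notin_pb_span by (auto simp: is_prime_ideal_def)
qed

lemma sigmaR_notin_pb_span:
  assumes endo: "ring_endo s" and "a \<notin> pb_span b"
  shows "sigmaR s a \<notin> pb_span b"
proof -
  obtain m where m: "m \<in> Poly_Mapping.keys a" "\<not> involves b m"
    using assms(2) by (auto simp: pb_span_def)
  then have "mon_shift m \<in> Poly_Mapping.keys (sigmaR s a)"
    by (simp add: in_keys_iff lookup_sigmaR_mon_shift[OF endo] ring_endo_eq_zero_iff[OF endo])
  with m(2) show ?thesis
    unfolding pb_span_def using involves_mon_shift by blast
qed

lemma spow_notin_pb_span:
  fixes a :: "('n::finite, 'k::field) dpoly"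
  assumes "ring_endo s" "a \<notin> pb_span b"
  shows "spow s a g \<notin> pb_span b"
proof -
  have "(sigmaR s ^^ i) a \<notin> pb_span b" for i
    by (induction i) (simp_all add: assms sigmaR_notin_pb_span)
  then show ?thesis
    unfolding spow_def
    by (intro prime_ideal_prod_notin prime_ideal_power_notin pb_span_prime) simp_all
qed

lemma pb_span_perfect: "ring_endo s \<Longrightarrow> is_perfect_sigma_ideal s (pb_span b :: ('n::finite, 'k::field) dpoly set)"
  unfolding is_perfect_sigma_ideal_def by (metis pb_span_sigma_ideal spow_notin_pb_span)

lemma pb_eq_pb_span:
  fixes s :: "'k::field \<Rightarrow> 'k" and b :: "'n \<Rightarrow> bool"
  assumes endo: "ring_endo s"
  shows "pb s b = pb_span b"
proof
  show "pb s b \<subseteq> pb_span b"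
    unfolding pb_def sigma_ideal_gen_def
    by (rule Inter_lower) (auto simp: pb_span_sigma_ideal yvar_in_pb_span_iff)
  show "pb_span b \<subseteq> pb s b"
    unfolding pb_def sigma_ideal_gen_def
  proof (intro Inter_greatest subsetI, elim CollectE conjE)
    fix J :: "('n, 'k) dpoly set" and f :: "('n, 'k) dpoly"
    assume J: "is_sigma_ideal s J" "{yvar i |i. b i} \<subseteq> J" and f: "f \<in> pb_span b"
    have ideal: "is_ideal J" using J(1) by (simp add: is_sigma_ideal_def)
    have "monom m \<in> J" if m: "m \<in> Poly_Mapping.keys f" for m
    proof -
      obtain v where "v \<in> Poly_Mapping.keys m" "b (fst v)"
        using f m unfolding pb_span_def involves_def by blast
      then obtain i j where ij: "(i, j) \<in> Poly_Mapping.keys m" "b i"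
        by (metis prod.collapse)
      have "(sigmaR s ^^ j) (yvar i) \<in> J"
        using J ij(2) by (induction j) (auto simp: is_sigma_ideal_def)
      then have "monom (Poly_Mapping.single (i, j) 1) \<in> J"
        by (simp add: funpow_sigmaR_yvar[OF endo])
      then have "monom (m - Poly_Mapping.single (i, j) 1) * monom (Poly_Mapping.single (i, j) 1) \<in> J"
        by (rule ideal_mult_left[OF ideal])
      moreover have "m - Poly_Mapping.single (i, j) 1 + Poly_Mapping.single (i, j) 1 = m"
        using ij(1) poly_mapping_nat_remove_single[of m "(i, j)"] by (simp add: in_keys_iff)
      ultimately show ?thesis
        by (simp add: monom_mult)
    qed
    then show "f \<in> J"
      by (rule ideal_if_monomials_in[OF ideal])
  qed
qed

lemma inj_pb_span: "inj (pb_span :: ('n \<Rightarrow> bool) \<Rightarrow> ('n, 'k::field) dpoly set)"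
proof (rule injI, rule ext)
  fix b c :: "'n \<Rightarrow> bool" and i
  assume eq: "(pb_span b :: ('n, 'k) dpoly set) = pb_span c"
  have "b i \<longleftrightarrow> (yvar i :: ('n, 'k) dpoly) \<in> pb_span b" by (simp add: yvar_in_pb_span_iff)
  also have "\<dots> \<longleftrightarrow> c i" by (simp add: eq yvar_in_pb_span_iff)
  finally show "b i = c i" .
qed

lemma perfect_closure_monomials:
  fixes s :: "'k::field \<Rightarrow> 'k" and S :: "('n::finite \<Rightarrow> nat poly) set"
  assumes endo: "ring_endo s"
  shows "perfect_closure s (ymon s ` S) = (\<Inter>b\<in>{b. ymon s ` S \<subseteq> pb_span b}. pb_span b)"
    (is "?I = _")
proof
  show "?I \<subseteq> (\<Inter>b\<in>{b. ymon s ` S \<subseteq> pb_span b}. pb_span b)"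
    by (intro INT_greatest perfect_closure_least pb_span_perfect[OF endo]) simp
  have perfect: "is_perfect_sigma_ideal s ?I"
    by (rule perfect_closure_perfect)
  show "(\<Inter>b\<in>{b. ymon s ` S \<subseteq> pb_span b}. pb_span b) \<subseteq> ?I"
  proof
    fix f :: "('n, 'k) dpoly"
    assume f: "f \<in> (\<Inter>b\<in>{b. ymon s ` S \<subseteq> pb_span b}. pb_span b)"
    have "monom m \<in> ?I" if m: "m \<in> Poly_Mapping.keys f" for m
    proof -
      \<comment> \<open>\<open>m \<notin> p^b\<close> for the \<open>b\<close> selecting exactly the variables absent from \<open>m\<close>\<close>
      define b where "b i \<longleftrightarrow> i \<notin> fst ` Poly_Mapping.keys m" for i
      have "\<not> involves b m"
        by (auto simp: involves_def b_def)
      then have "f \<notin> pb_span b"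
        using m by (auto simp: pb_span_def)
      then have "\<not> ymon s ` S \<subseteq> pb_span b"
        using INT_D[OF f, of b] by blast
      then obtain u where u: "u \<in> S" "ymon s u \<notin> pb_span b"
        by blast
      obtain mu where mu: "ymon s u = monom mu"
        using ymon_is_monom[OF endo] by blast
      have "\<not> involves b mu"
        using u(2) by (simp add: mu pb_span_def)
      then have "fst ` Poly_Mapping.keys mu \<subseteq> fst ` Poly_Mapping.keys m"
        by (auto simp: involves_def b_def)
      moreover have "monom mu \<in> ?I"
        using u(1) perfect_closure_subset[of "ymon s ` S" s] by (auto simp flip: mu)
      ultimately show ?thesis
        by (rule monom_in_if_vars_subset[OF endo perfect, rotated])
    qed
    moreover have "is_ideal ?I"
      using perfect by (simp add: is_perfect_sigma_ideal_def is_sigma_ideal_def)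
    ultimately show "f \<in> ?I"
      by (rule ideal_if_monomials_in[rotated])
  qed
qed

theorem theorem6p3:
  fixes s :: "'k::field_char_0 \<Rightarrow> 'k"
    and S :: "('n::finite \<Rightarrow> nat poly) set"
  assumes "ring_endo s"
  defines "I \<equiv> perfect_closure s (ymon s ` S)"
  shows "(\<exists>B :: ('n \<Rightarrow> bool) set. finite B \<and> I = (\<Inter>b\<in>B. pb s b))
       \<and> (\<forall>B1 B2 :: ('n \<Rightarrow> bool) set.
            finite B1 \<and> finite B2 \<and>
            I = (\<Inter>b\<in>B1. pb s b) \<and> (\<forall>b\<in>B1. (\<Inter>c\<in>B1 - {b}. pb s c) \<noteq> I) \<and>
            I = (\<Inter>b\<in>B2. pb s b) \<and> (\<forall>b\<in>B2. (\<Inter>c\<in>B2 - {b}. pb s c) \<noteq> I)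
            \<longrightarrow> B1 = B2)"
proof -
  have pb: "pb s = (pb_span :: _ \<Rightarrow> ('n, 'k) dpoly set)"
    using pb_eq_pb_span[OF assms(1)] by blast
  have avoid: "\<exists>b\<in>B. pb_span b \<subseteq> (pb_span c :: ('n, 'k) dpoly set)"
    if "finite B" "(\<Inter>b\<in>B. pb_span b) \<subseteq> (pb_span c :: ('n, 'k) dpoly set)" for B c
    using prime_ideal_contains_Inter[OF pb_span_prime that(1) pb_span_ideal that(2)] .
  show ?thesis
    unfolding pb
  proof (intro conjI allI impI, goal_cases)
    case 1
    show ?case
      by (intro exI[of _ "{b. ymon s ` S \<subseteq> pb_span b}"])
        (simp add: I_def perfect_closure_monomials[OF assms(1)])
  next
    case (2 B1 B2)
    then show ?case
      by (elim conjE) (rule irredundant_Inter_unique[OF inj_pb_span avoid]; simp)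
  qed
qed

end
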